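(* Let $A_1, C_2\in\mathbb{R}^{n\times m}$ and fix a position $(r,c)$ with $r\in\{1,\dots,n\}$, $c\in\{1,\dots,m\}$. For $j\neq c$ let $d_{rj}=C_2(r,\max(j,c))-C_2(r,\min(j,c))$ denote the pairwise difference in row $r$ of $C_2$ between columns $j$ and $c$. If $d_{rj}<0$ for all $j<c$ and $d_{rj}>0$ for all $j>c$, then the optimization problem $$\min_{E,\phi\in\mathbb{R}^{n\times m}:\ \phi(r,c)=0}\ \|E\|_F^2$$ subject to, for all rows $\gamma,\bar\gamma$ and columns $\sigma,\bar\sigma$: $A_1(\gamma,\sigma)+E(\gamma,\sigma)-A_1(\bar\gamma,\sigma)-E(\bar\gamma,\sigma)=\phi(\gamma,\sigma)-\phi(\bar\gamma,\sigma)$, $C_2(\gamma,\sigma)-C_2(\gamma,\bar\sigma)=\phi(\gamma,\sigma)-\phi(\gamma,\bar\sigma)$, $\phi(\gamma,\sigma)>0$ for all $(\gamma,\sigma)\ne(r,c)$, produces a finite matrix $E$, i.e. there exist real matrices $E,\phi$ satisfying all the constraints, so that $\phi$ is an exact potential for the bimatrix game $(A_1+E,\,C_2)$ with unique global minimum at $(r,c)$.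
   Context: Matrices are indexed by rows (player 1's actions) and columns (player 2's actions); both players are minimizers. $\|\cdot\|_F$ is the Frobenius norm. A matrix $\phi$ is an exact potential for the bimatrix game $(X,Y)$ if $X(\gamma,\sigma)-X(\bar\gamma,\sigma)=\phi(\gamma,\sigma)-\phi(\bar\gamma,\sigma)$ and $Y(\gamma,\sigma)-Y(\gamma,\bar\sigma)=\phi(\gamma,\sigma)-\phi(\gamma,\bar\sigma)$ for all $\gamma,\bar\gamma,\sigma,\bar\sigma$. *)

theory Defs
  imports Complex_Main
begin

(* n x m real matrices are represented as functions nat => nat => real,
   indexed by rows 1..n and columns 1..m; values outside this range are irrelevant. *)

definition pdiff :: "(nat \<Rightarrow> nat \<Rightarrow> real) \<Rightarrow> nat \<Rightarrow> nat \<Rightarrow> nat \<Rightarrow> real" where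
  "pdiff C r c j = C r (max j c) - C r (min j c)"

end

theory Submission
  imports Defs
begin

(* An exact potential for player 2 may differ from C2 only by a shift of each row, and
   the sign conditions on pdiff say that C2(r,c) is the strict minimum of row r.  So
   shift row r by -C2(r,c) and every other row so that its minimum becomes 1; this
   potential vanishes at (r,c) and is positive elsewhere.  Player 1's condition is then
   met by E := phi - A1, for which A1 + E = phi. *)

lemma pdiff_signs_imp_strict_row_min:
  fixes C :: "nat \<Rightarrow> nat \<Rightarrow> real"
  assumes "\<forall>j\<in>S. j < c \<longrightarrow> pdiff C r c j < 0"
    and "\<forall>j\<in>S. j > c \<longrightarrow> pdiff C r c j > 0"
    and "j \<in> S" and "j \<noteq> c"
  shows "C r c < C r j"
proof -
  consider "j < c" | "j > c" using \<open>j \<noteq> c\<close> by linarith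
  then show ?thesis
  proof cases
    case 1
    with assms(1,3) show ?thesis by (auto simp: pdiff_def max_def min_def)
  next
    case 2
    with assms(2,3) show ?thesis by (auto simp: pdiff_def max_def min_def)
  qed
qed

definition row_shifted_potential ::
    "(nat \<Rightarrow> nat \<Rightarrow> real) \<Rightarrow> nat \<Rightarrow> nat \<Rightarrow> nat set \<Rightarrow> nat \<Rightarrow> nat \<Rightarrow> real" where
  "row_shifted_potential C r c S \<gamma> \<sigma> =
     C \<gamma> \<sigma> - (if \<gamma> = r then C r c else Min (C \<gamma> ` S) - 1)"

lemma row_shifted_potential_diff:
  "row_shifted_potential C r c S \<gamma> \<sigma> - row_shifted_potential C r c S \<gamma> \<sigma>' = C \<gamma> \<sigma> - C \<gamma> \<sigma>'"
  by (simp add: row_shifted_potential_def)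

lemma row_shifted_potential_at_centre: "row_shifted_potential C r c S r c = 0"
  by (simp add: row_shifted_potential_def)

lemma row_shifted_potential_pos:
  assumes "finite S" and "\<sigma> \<in> S"
    and "\<gamma> = r \<Longrightarrow> C r c < C r \<sigma>"
  shows "row_shifted_potential C r c S \<gamma> \<sigma> > 0"
proof (cases "\<gamma> = r")
  case False
  have "Min (C \<gamma> ` S) \<le> C \<gamma> \<sigma>"
    using assms(1,2) by (intro Min_le) auto
  with False show ?thesis by (simp add: row_shifted_potential_def)
qed (use assms(3) in \<open>simp add: row_shifted_potential_def\<close>)

theorem theorem2:
  fixes A1 C2 :: "nat \<Rightarrow> nat \<Rightarrow> real" and n m r c :: nat
  assumes "r \<in> {1..n}" and "c \<in> {1..m}"
    and "\<forall>j\<in>{1..m}. j < c \<longrightarrow> pdiff C2 r c j < 0"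
    and "\<forall>j\<in>{1..m}. j > c \<longrightarrow> pdiff C2 r c j > 0"
  shows "\<exists>E \<phi> :: nat \<Rightarrow> nat \<Rightarrow> real. \<phi> r c = 0 \<and>
     (\<forall>\<gamma>\<in>{1..n}. \<forall>\<gamma>'\<in>{1..n}. \<forall>\<sigma>\<in>{1..m}. \<forall>\<sigma>'\<in>{1..m}.
        A1 \<gamma> \<sigma> + E \<gamma> \<sigma> - A1 \<gamma>' \<sigma> - E \<gamma>' \<sigma> = \<phi> \<gamma> \<sigma> - \<phi> \<gamma>' \<sigma> \<and>
        C2 \<gamma> \<sigma> - C2 \<gamma> \<sigma>' = \<phi> \<gamma> \<sigma> - \<phi> \<gamma> \<sigma>') \<and>
     (\<forall>\<gamma>\<in>{1..n}. \<forall>\<sigma>\<in>{1..m}. (\<gamma>, \<sigma>) \<noteq> (r, c) \<longrightarrow> \<phi> \<gamma> \<sigma> > 0)"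
proof -
  define \<phi> where "\<phi> = row_shifted_potential C2 r c {1..m}"
  define E where "E = (\<lambda>\<gamma> \<sigma>. \<phi> \<gamma> \<sigma> - A1 \<gamma> \<sigma>)"
  have "\<phi> \<gamma> \<sigma> > 0" if "\<sigma> \<in> {1..m}" "(\<gamma>, \<sigma>) \<noteq> (r, c)" for \<gamma> \<sigma>
    unfolding \<phi>_def using that assms(3,4)
    by (intro row_shifted_potential_pos pdiff_signs_imp_strict_row_min) auto
  moreover have "\<phi> r c = 0"
    by (simp add: \<phi>_def row_shifted_potential_at_centre)
  moreover have "C2 \<gamma> \<sigma> - C2 \<gamma> \<sigma>' = \<phi> \<gamma> \<sigma> - \<phi> \<gamma> \<sigma>'" for \<gamma> \<sigma> \<sigma>'
    by (simp add: \<phi>_def row_shifted_potential_diff)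
  ultimately show ?thesis
    by (intro exI[of _ E] exI[of _ \<phi>]) (simp add: E_def)
qed

end
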